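(* Let $H$ be a hypergraph on $V=[n]$ and let $A,B$ be hyperedges of $H$. Then $A$ and $B$ are $r$-orthogonal if and only if $\mathrm{cl}_r(\{A,B\})=\mathrm{cl}_r(\{A\})\cup\mathrm{cl}_r(\{B\})$.
   Context: Hypergraphs on $V$ are identified with their hyperedge sets; $\{A\}$, $\{A,B\}$ denote hypergraphs on $V$ with the indicated hyperedges. $\mathcal K_r(n)$ is the class of hypergraphs $\mathcal E$ on $V$ satisfying: (R0) every $X\subseteq V$ with $|X|\le r$ is in $\mathcal E$; (R1) $A\in\mathcal E\Rightarrow V\setminus A\in\mathcal E$; (R2) $A,B\in\mathcal E$ and $|A\cap B|\ge r\Rightarrow A\cup B\in\mathcal E$. $\mathcal K^0_r(n)$ is the class satisfying (R0) and (R1) only. $\mathrm{cl}_r(H)$ (resp. $\mathrm{cl}^0_r(H)$) is the intersection of all hypergraphs in $\mathcal K_r(n)$ (resp. $\mathcal K^0_r(n)$) containing $H$. $A,B$ are $r$-orthogonal if $\mathrm{cl}_r(\{A,B\})=\mathrm{cl}^0_r(\{A,B\})$. *)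

theory Defs
  imports Main
begin

definition ground :: "nat \<Rightarrow> nat set" where
  "ground n = {1..n}"

definition hypergraph :: "nat \<Rightarrow> nat set set \<Rightarrow> bool" where
  "hypergraph n H \<longleftrightarrow> H \<subseteq> Pow (ground n)"

definition K0 :: "nat \<Rightarrow> nat \<Rightarrow> nat set set set" where
  "K0 r n = {E. hypergraph n E
      \<and> (\<forall>X. X \<subseteq> ground n \<and> card X \<le> r \<longrightarrow> X \<in> E)
      \<and> (\<forall>A\<in>E. ground n - A \<in> E)}"

definition K :: "nat \<Rightarrow> nat \<Rightarrow> nat set set set" where
  "K r n = {E. E \<in> K0 r n
      \<and> (\<forall>A\<in>E. \<forall>B\<in>E. card (A \<inter> B) \<ge> r \<longrightarrow> A \<union> B \<in> E)}"

definition cl :: "nat \<Rightarrow> nat \<Rightarrow> nat set set \<Rightarrow> nat set set" where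
  "cl r n H = \<Inter> {E \<in> K r n. H \<subseteq> E}"

definition cl0 :: "nat \<Rightarrow> nat \<Rightarrow> nat set set \<Rightarrow> nat set set" where
  "cl0 r n H = \<Inter> {E \<in> K0 r n. H \<subseteq> E}"

definition orthogonal :: "nat \<Rightarrow> nat \<Rightarrow> nat set \<Rightarrow> nat set \<Rightarrow> bool" where
  "orthogonal r n A B \<longleftrightarrow> cl r n {A, B} = cl0 r n {A, B}"

end

theory Submission
  imports Defs
begin

text \<open>The two closures of a single hyperedge A coincide: the hypergraph of all sets that are
small, co-small, equal to A or equal to its complement already satisfies (R2), since two of its
members with at least r \<ge> 1 common points are nested, have a co-small union, or are equal
(A and its complement being disjoint). Moreover the (R0)/(R1)-closure is additive in the
generating hyperedges. Hence the (R0)/(R1)-closure of {A, B} is the union of the full closures of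
{A} and {B}, which turns orthogonality into the stated identity.\<close>

definition complement_closure :: "nat \<Rightarrow> nat \<Rightarrow> nat set set \<Rightarrow> nat set set" where
  "complement_closure r n H = {X. X \<subseteq> ground n \<and>
     (card X \<le> r \<or> card (ground n - X) \<le> r \<or> X \<in> H \<or> ground n - X \<in> H)}"

lemma finite_ground [simp]: "finite (ground n)"
  by (simp add: ground_def)

lemma complement_closure_in_K0:
  assumes "hypergraph n H"
  shows "complement_closure r n H \<in> K0 r n"
  using assms unfolding K0_def hypergraph_def complement_closure_def
  by (auto simp: double_diff)

lemma complement_closure_least:
  assumes E: "E \<in> K0 r n" and "H \<subseteq> E"
  shows "complement_closure r n H \<subseteq> E"
proof
  fix X assume "X \<in> complement_closure r n H"
  then have X: "X \<subseteq> ground n"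
    and cases: "card X \<le> r \<or> card (ground n - X) \<le> r \<or> X \<in> H \<or> ground n - X \<in> H"
    by (auto simp: complement_closure_def)
  have small: "Y \<in> E" if "Y \<subseteq> ground n" "card Y \<le> r" for Y
    using E that by (auto simp: K0_def)
  have compl: "ground n - Y \<in> E" if "Y \<in> E" for Y
    using E that by (auto simp: K0_def)
  have "ground n - (ground n - X) = X"
    using X by auto
  then have co: "X \<in> E" if "ground n - X \<in> E"
    using compl[OF that] by simp
  from cases show "X \<in> E"
    using X small co \<open>H \<subseteq> E\<close> by auto
qed

lemma cl0_eq_complement_closure:
  assumes "hypergraph n H"
  shows "cl0 r n H = complement_closure r n H"
proof
  have "H \<subseteq> complement_closure r n H"
    using assms by (auto simp: hypergraph_def complement_closure_def)
  then show "cl0 r n H \<subseteq> complement_closure r n H"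
    unfolding cl0_def using complement_closure_in_K0[OF assms] by (intro Inter_lower) auto
  show "complement_closure r n H \<subseteq> cl0 r n H"
    unfolding cl0_def using complement_closure_least by blast
qed

lemma cl0_Un:
  assumes "hypergraph n H" and "hypergraph n H'"
  shows "cl0 r n (H \<union> H') = cl0 r n H \<union> cl0 r n H'"
proof -
  have "hypergraph n (H \<union> H')"
    using assms by (simp add: hypergraph_def)
  then show ?thesis
    using assms by (simp add: cl0_eq_complement_closure) (auto simp: complement_closure_def)
qed

lemma cl_eq_cl0I:
  assumes "cl0 r n H \<in> K r n"
  shows "cl r n H = cl0 r n H"
proof
  have "H \<subseteq> cl0 r n H"
    unfolding cl0_def by blast
  then show "cl r n H \<subseteq> cl0 r n H"
    unfolding cl_def using assms by (intro Inter_lower) auto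
  show "cl0 r n H \<subseteq> cl r n H"
    unfolding cl0_def cl_def K_def by blast
qed

lemma subset_if_card_Int_ge:
  assumes "finite X" and "card X \<le> r" and "r \<le> card (X \<inter> Y)"
  shows "X \<subseteq> Y"
proof -
  have "X \<inter> Y = X"
    using assms by (intro card_seteq) auto
  then show ?thesis by blast
qed

lemma complement_closure_singleton_union:
  assumes r: "1 \<le> r" and A: "A \<subseteq> ground n"
    and X: "X \<in> complement_closure r n {A}" and Y: "Y \<in> complement_closure r n {A}"
    and meet: "r \<le> card (X \<inter> Y)"
  shows "X \<union> Y \<in> complement_closure r n {A}"
proof -
  let ?V = "ground n"
  have XV: "X \<subseteq> ?V" and YV: "Y \<subseteq> ?V"
    using X Y by (auto simp: complement_closure_def)
  then have fin: "finite X" "finite Y"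
    by (auto intro: finite_subset)
  consider "card X \<le> r" | "card Y \<le> r" | "card (?V - X) \<le> r" | "card (?V - Y) \<le> r"
    | "X \<in> {A, ?V - A}" "Y \<in> {A, ?V - A}"
    using X Y A by (auto simp: complement_closure_def)
  then show ?thesis
  proof cases
    case 1
    then have "X \<union> Y = Y"
      using subset_if_card_Int_ge[OF fin(1) _ meet] by blast
    then show ?thesis using Y by simp
  next
    case 2
    then have "X \<union> Y = X"
      using subset_if_card_Int_ge[OF fin(2), of r X] meet by (auto simp: Int_commute)
    then show ?thesis using X by simp
  next
    case 3
    have "card (?V - (X \<union> Y)) \<le> card (?V - X)"
      by (intro card_mono) auto
    then show ?thesis using 3 XV YV by (auto simp: complement_closure_def)
  next
    case 4
    have "card (?V - (X \<union> Y)) \<le> card (?V - Y)"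
      by (intro card_mono) auto
    then show ?thesis using 4 XV YV by (auto simp: complement_closure_def)
  next
    case 5
    have "X = Y"
    proof (rule ccontr)
      assume "X \<noteq> Y"
      with 5 have "X \<inter> Y = {}" by auto
      with meet r show False by simp
    qed
    then show ?thesis using X by simp
  qed
qed

lemma cl_singleton_eq_cl0:
  assumes "1 \<le> r" and "A \<subseteq> ground n"
  shows "cl r n {A} = cl0 r n {A}"
proof (rule cl_eq_cl0I)
  have H: "hypergraph n {A}"
    using assms(2) by (simp add: hypergraph_def)
  show "cl0 r n {A} \<in> K r n"
    using complement_closure_in_K0[OF H] complement_closure_singleton_union[OF assms]
    unfolding cl0_eq_complement_closure[OF H] K_def by auto
qed

theorem mainTheorem15:
  fixes n r :: nat and H :: "nat set set" and A B :: "nat set"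
  assumes "1 \<le> r"
    and "hypergraph n H"
    and "A \<in> H" and "B \<in> H"
  shows "orthogonal r n A B \<longleftrightarrow> cl r n {A, B} = cl r n {A} \<union> cl r n {B}"
proof -
  have A: "A \<subseteq> ground n" and B: "B \<subseteq> ground n"
    using assms unfolding hypergraph_def by auto
  then have "cl0 r n {A, B} = cl0 r n {A} \<union> cl0 r n {B}"
    using cl0_Un[of n "{A}" "{B}" r] by (simp add: hypergraph_def insert_is_Un[of A "{B}"])
  also have "\<dots> = cl r n {A} \<union> cl r n {B}"
    using cl_singleton_eq_cl0[OF assms(1)] A B by simp
  finally show ?thesis
    unfolding orthogonal_def by simp
qed

end
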